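(* Consider $n$ robots initially placed at distinct nodes of the infinite grid $\mathbb{Z}\times\mathbb{Z}$ together with a finite set $M$ of meeting nodes, in the model described in the context. Suppose the initial configuration $C(0)$ belongs to $\mathcal{I}_3^{b3}\cup\mathcal{I}_4^{b3}$. Then the gathering over Weber nodes problem cannot be solved from $C(0)$: there is no deterministic distributed algorithm guaranteeing that, from $C(0)$, all robots eventually gather (and remain) at a single node that is a Weber node of $C(0)$.
   Context: Model: robots are anonymous, homogeneous (all run the same deterministic algorithm), oblivious, silent, with no agreement on a global coordinate system or on chirality, and with unlimited visibility. They operate in Look-Compute-Move cycles under a fair asynchronous scheduler; in a cycle a robot either stays or moves to an adjacent grid node, moves being instantaneous. Robots have global strong multiplicity detection (they see the exact number of robots on every node) and see the meeting nodes. Let $d$ be the grid (shortest path) distance, $\lambda_t(v)$ the number of robots at node $v$ at time $t$, $c_t(m)=\sum_v d(v,m)\lambda_t(v)$, and $W(t)$ the set of meeting nodes $m\in M$ minimizing $c_t(m)$ (the Weber nodes). A symmetry of $M$ is a grid automorphism (reflection or rotation) mapping $M$ to itself; a symmetry of the configuration $C(t)$ is a grid automorphism $\phi$ preserving meeting nodes and satisfying $\lambda_t(\phi(v))=\lambda_t(v)$ for all $v$. Class $\mathcal{I}_3^{b3}$: $M$ admits a unique line of (reflection) symmetry $l$, $|W(t)|\ge 2$, $C(t)$ is symmetric with respect to $l$, and there is no Weber node and no robot on $l$ (there may be meeting nodes on $l$). Class $\mathcal{I}_4^{b3}$: $M$ admits rotational symmetry with center $c$, $|W(t)|\ge 2$,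 $C(t)$ is symmetric with respect to that rotational symmetry, and there is neither a meeting node nor a robot on $c$. *)

theory Defs
  imports Main
begin

type_synonym node = "int \<times> int"

definition addv :: "node \<Rightarrow> node \<Rightarrow> node" where
  "addv u v = (fst u + fst v, snd u + snd v)"

definition subv :: "node \<Rightarrow> node \<Rightarrow> node" where
  "subv u v = (fst u - fst v, snd u - snd v)"

definition gdist :: "node \<Rightarrow> node \<Rightarrow> nat" where
  "gdist u v = nat (\<bar>fst u - fst v\<bar> + \<bar>snd u - snd v\<bar>)"

text \<open>The 8 linear automorphisms of the grid fixing the origin
  (possible orientations of a local coordinate system; no chirality).\<close>
definition ortho_maps :: "(node \<Rightarrow> node) set" where
  "ortho_maps = {f. \<exists>(s1::int) (s2::int) (sw::bool). s1 \<in> {1, -1} \<and> s2 \<in> {1, -1} \<and>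
      f = (\<lambda>(x, y). if sw then (s1 * y, s2 * x) else (s1 * x, s2 * y))}"

definition grid_aut :: "(node \<Rightarrow> node) \<Rightarrow> bool" where
  "grid_aut \<phi> \<longleftrightarrow> (\<exists>g \<in> ortho_maps. \<exists>b. \<phi> = (\<lambda>v. addv (g v) b))"

definition orient :: "(node \<Rightarrow> node) \<Rightarrow> int" where
  "orient \<phi> = (let e1 = subv (\<phi> (1, 0)) (\<phi> (0, 0)); e2 = subv (\<phi> (0, 1)) (\<phi> (0, 0))
               in fst e1 * snd e2 - fst e2 * snd e1)"

text \<open>Reflection in a line: orientation-reversing involutive grid automorphism.
  Its line of symmetry is its fixed point set; a node lies on the line iff it is fixed.\<close>
definition reflection :: "(node \<Rightarrow> node) \<Rightarrow> bool" where
  "reflection \<phi> \<longleftrightarrow> grid_aut \<phi> \<and> orient \<phi> = -1 \<and> (\<forall>v. \<phi> (\<phi> v) = v)"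

text \<open>Non-trivial rotation: orientation-preserving grid automorphism that is not a
  translation.  Its center is its unique fixed point in the plane; a node lies on the
  center iff it is fixed.\<close>
definition rotation :: "(node \<Rightarrow> node) \<Rightarrow> bool" where
  "rotation \<phi> \<longleftrightarrow> grid_aut \<phi> \<and> orient \<phi> = 1 \<and>
     (\<exists>v. subv (\<phi> v) (\<phi> (0, 0)) \<noteq> v)"

text \<open>Robots are indexed by i < n; pos i is the node of robot i.\<close>
definition lam :: "nat \<Rightarrow> (nat \<Rightarrow> node) \<Rightarrow> node \<Rightarrow> nat" where
  "lam n pos v = card {i. i < n \<and> pos i = v}"

definition cost :: "nat \<Rightarrow> (nat \<Rightarrow> node) \<Rightarrow> node \<Rightarrow> nat" where
  "cost n pos m = (\<Sum>v \<in> pos ` {..<n}. gdist v m * lam n pos v)"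

definition weber :: "node set \<Rightarrow> nat \<Rightarrow> (nat \<Rightarrow> node) \<Rightarrow> node set" where
  "weber M n pos = {m \<in> M. \<forall>m' \<in> M. cost n pos m \<le> cost n pos m'}"

definition config_sym :: "node set \<Rightarrow> nat \<Rightarrow> (nat \<Rightarrow> node) \<Rightarrow> (node \<Rightarrow> node) \<Rightarrow> bool" where
  "config_sym M n pos \<phi> \<longleftrightarrow> grid_aut \<phi> \<and> \<phi> ` M = M \<and> (\<forall>v. lam n pos (\<phi> v) = lam n pos v)"

definition classI3b3 :: "node set \<Rightarrow> nat \<Rightarrow> (nat \<Rightarrow> node) \<Rightarrow> bool" where
  "classI3b3 M n pos \<longleftrightarrow> (\<exists>\<phi>. reflection \<phi> \<and> \<phi> ` M = M \<and>
      (\<forall>\<psi>. reflection \<psi> \<and> \<psi> ` M = M \<longrightarrow> \<psi> = \<phi>) \<and>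
      2 \<le> card (weber M n pos) \<and>
      config_sym M n pos \<phi> \<and>
      (\<forall>v. \<phi> v = v \<longrightarrow> v \<notin> weber M n pos \<and> lam n pos v = 0))"

definition classI4b3 :: "node set \<Rightarrow> nat \<Rightarrow> (nat \<Rightarrow> node) \<Rightarrow> bool" where
  "classI4b3 M n pos \<longleftrightarrow> (\<exists>\<phi>. rotation \<phi> \<and> \<phi> ` M = M \<and>
      2 \<le> card (weber M n pos) \<and>
      config_sym M n pos \<phi> \<and>
      (\<forall>v. \<phi> v = v \<longrightarrow> v \<notin> M \<and> lam n pos v = 0))"

datatype move = Stay | North | East | South | West

fun mvec :: "move \<Rightarrow> node" where
  "mvec Stay = (0, 0)"
| "mvec North = (0, 1)"
| "mvec East = (1, 0)"
| "mvec South = (0, -1)"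
| "mvec West = (-1, 0)"

text \<open>A snapshot in the robot's local coordinates (robot at the origin): multiplicity of
  every node and the set of meeting nodes.\<close>
type_synonym view = "(node \<Rightarrow> nat) \<times> node set"

text \<open>A deterministic, oblivious algorithm, common to all (anonymous) robots.\<close>
type_synonym algorithm = "view \<Rightarrow> move"

text \<open>F : local-to-global orientation of the robot's (arbitrary) coordinate system.\<close>
definition view_of :: "node set \<Rightarrow> nat \<Rightarrow> (nat \<Rightarrow> node) \<Rightarrow> node \<Rightarrow> (node \<Rightarrow> node) \<Rightarrow> view" where
  "view_of M n pos x F = ((\<lambda>u. lam n pos (addv x (F u))), {u. addv x (F u) \<in> M})"

text \<open>Asynchronous Look-Compute-Move execution: P t i is the node of robot i at time t,
  Q t i the (global) move computed at the last Look and not yet executed.  At each step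
  every robot independently idles, performs Look+Compute (on the current snapshot),
  or performs its instantaneous Move.  F i is the fixed local frame of robot i.\<close>
definition async_execution ::
  "algorithm \<Rightarrow> node set \<Rightarrow> nat \<Rightarrow> (nat \<Rightarrow> node) \<Rightarrow> (nat \<Rightarrow> node \<Rightarrow> node)
    \<Rightarrow> (nat \<Rightarrow> nat \<Rightarrow> node) \<Rightarrow> (nat \<Rightarrow> nat \<Rightarrow> node option) \<Rightarrow> bool" where
  "async_execution A M n pos0 F P Q \<longleftrightarrow>
     (\<forall>i<n. F i \<in> ortho_maps) \<and>
     (\<forall>i<n. P 0 i = pos0 i \<and> Q 0 i = None) \<and>
     (\<forall>t. \<forall>i<n.
        (P (Suc t) i = P t i \<and> Q (Suc t) i = Q t i)
      \<or> (Q t i = None \<and> P (Suc t) i = P t i \<and>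
         Q (Suc t) i = Some (F i (mvec (A (view_of M n (P t) (P t i) (F i))))))
      \<or> (\<exists>d. Q t i = Some d \<and> P (Suc t) i = addv (P t i) d \<and> Q (Suc t) i = None))"

text \<open>Fairness: every robot completes infinitely many cycles.\<close>
definition fair :: "nat \<Rightarrow> (nat \<Rightarrow> nat \<Rightarrow> node option) \<Rightarrow> bool" where
  "fair n Q \<longleftrightarrow> (\<forall>i<n. \<forall>t. \<exists>t'\<ge>t. Q t' i \<noteq> None \<and> Q (Suc t') i = None)"

definition gathers_at_weber :: "node set \<Rightarrow> nat \<Rightarrow> (nat \<Rightarrow> node) \<Rightarrow> (nat \<Rightarrow> nat \<Rightarrow> node) \<Rightarrow> bool" where
  "gathers_at_weber M n pos0 P \<longleftrightarrow>
     (\<exists>T. \<exists>v \<in> weber M n pos0. \<forall>t\<ge>T. \<forall>i<n. P t i = v)"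

definition solves :: "algorithm \<Rightarrow> node set \<Rightarrow> nat \<Rightarrow> (nat \<Rightarrow> node) \<Rightarrow> bool" where
  "solves A M n pos0 \<longleftrightarrow>
     (\<forall>F P Q. async_execution A M n pos0 F P Q \<and> fair n Q \<longrightarrow> gathers_at_weber M n pos0 P)"

end

theory Submission
  imports Defs "HOL-Library.Product_Lexorder"
begin

(* Under an involutive symmetry psi of C(0) that fixes no robot and no Weber node
   (the reflection of class I3b3; the half-turn phi or phi o phi of class I4b3), the
   scheduler pairs every robot with the robot at the mirror node, gives the two mirror-image
   local frames and activates all robots synchronously.  Paired robots then always see
   mirror-image snapshots and make mirror-image moves, so the configuration stays
   psi-symmetric for ever; a gathering node would therefore be fixed by psi, but no Weber
   node is. *)

lemma ortho_maps_addv: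
  assumes "g \<in> ortho_maps"
  shows "g (addv u w) = addv (g u) (g w)"
  using assms unfolding ortho_maps_def addv_def
  by (cases u; cases w; auto simp: algebra_simps)

lemma ortho_maps_origin:
  assumes "g \<in> ortho_maps"
  shows "g (0, 0) = (0, 0)"
  using assms unfolding ortho_maps_def by auto

lemma id_in_ortho_maps: "id \<in> ortho_maps"
  unfolding ortho_maps_def
  by (rule CollectI, rule exI[of _ 1], rule exI[of _ 1], rule exI[of _ False]) auto

lemma uminus_in_ortho_maps: "(\<lambda>(x, y). (- x, - y)) \<in> ortho_maps"
  unfolding ortho_maps_def
  by (rule CollectI, rule exI[of _ "-1"], rule exI[of _ "-1"], rule exI[of _ False]) auto

definition linear_part :: "(node \<Rightarrow> node) \<Rightarrow> node \<Rightarrow> node" where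
  "linear_part \<phi> v = subv (\<phi> v) (\<phi> (0, 0))"

lemma grid_aut_linear_part:
  assumes "grid_aut \<phi>"
  shows "linear_part \<phi> \<in> ortho_maps"
    and "\<phi> (addv v u) = addv (\<phi> v) (linear_part \<phi> u)"
proof -
  obtain g b where g: "g \<in> ortho_maps" and \<phi>: "\<phi> = (\<lambda>v. addv (g v) b)"
    using assms unfolding grid_aut_def by blast
  have "linear_part \<phi> = g"
    using ortho_maps_origin[OF g] by (auto simp: \<phi> linear_part_def addv_def subv_def)
  then show "linear_part \<phi> \<in> ortho_maps" and "\<phi> (addv v u) = addv (\<phi> v) (linear_part \<phi> u)"
    using g ortho_maps_addv[OF g] by (auto simp: \<phi> addv_def)
qed

definition half_turn :: "node \<Rightarrow> node \<Rightarrow> node" where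
  "half_turn c v = subv c v"

lemma grid_aut_half_turn: "grid_aut (half_turn c)"
  unfolding grid_aut_def
proof (intro bexI exI)
  show "half_turn c = (\<lambda>v. addv ((\<lambda>(x, y). (- x, - y)) v) c)"
    by (auto simp: fun_eq_iff half_turn_def addv_def subv_def)
qed (rule uminus_in_ortho_maps)

lemma rotation_cases:
  assumes "rotation \<phi>"
  obtains c where "\<phi> = half_turn c"
  | s b1 b2 where "s \<in> {1, -1}" "\<phi> = (\<lambda>(x, y). (s * y + b1, - s * x + b2))"
proof -
  obtain g b where "g \<in> ortho_maps" and \<phi>: "\<phi> = (\<lambda>v. addv (g v) b)"
    using assms unfolding rotation_def grid_aut_def by blast
  then obtain s1 s2 :: int and sw where s: "s1 \<in> {1, -1}" "s2 \<in> {1, -1}"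
    and g: "g = (\<lambda>(x, y). if sw then (s1 * y, s2 * x) else (s1 * x, s2 * y))"
    unfolding ortho_maps_def by blast
  obtain b1 b2 where b: "b = (b1, b2)" by (cases b)
  have \<phi>_xy: "\<phi> (x, y) = (if sw then (s1 * y + b1, s2 * x + b2) else (s1 * x + b1, s2 * y + b2))"
    for x y by (simp add: \<phi> g b addv_def)
  have orient: "orient \<phi> = (if sw then - s1 * s2 else s1 * s2)"
    by (simp add: orient_def subv_def \<phi>_xy)
  show thesis
  proof (cases sw)
    case False
    have "\<not> (s1 = 1 \<and> s2 = 1)"
    proof
      assume "s1 = 1 \<and> s2 = 1"
      then have "subv (\<phi> v) (\<phi> (0, 0)) = v" for v
        using False by (cases v) (simp add: \<phi>_xy subv_def)
      then show False using assms unfolding rotation_def by blast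
    qed
    with s orient False assms have "s1 = -1" "s2 = -1"
      unfolding rotation_def by auto
    then have "\<phi> = half_turn b"
      using False by (auto simp: fun_eq_iff \<phi>_xy half_turn_def subv_def b)
    then show thesis by (rule that(1))
  next
    case True
    with s orient assms have "s2 = - s1"
      unfolding rotation_def by auto
    then have "\<phi> = (\<lambda>(x, y). (s1 * y + b1, - s1 * x + b2))"
      using True by (auto simp: fun_eq_iff \<phi>_xy)
    with s show thesis by (intro that(2))
  qed
qed

lemma rotation_half_turn:
  assumes "rotation \<phi>"
  obtains c where "half_turn c = \<phi> \<or> half_turn c = \<phi> \<circ> \<phi>"
    and "\<And>v. half_turn c v = v \<Longrightarrow> \<phi> v = v"
  using assms
proof (cases rule: rotation_cases)
  case (1 c)
  then show thesis by (intro that[of c]) auto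
next
  case (2 s b1 b2)
  have ss: "s * s = 1" using 2(1) by auto
  define c where "c = (s * b2 + b1, b2 - s * b1)"
  show thesis
  proof (rule that[of c])
    show "half_turn c = \<phi> \<or> half_turn c = \<phi> \<circ> \<phi>"
      using ss by (auto simp: fun_eq_iff 2(2) half_turn_def subv_def c_def algebra_simps)
    fix v assume "half_turn c v = v"
    then show "\<phi> v = v"
      using 2(1) by (cases v) (auto simp: 2(2) half_turn_def subv_def c_def)
  qed
qed

lemma lam_pos:
  assumes "i < n"
  shows "0 < lam n p (p i)"
  using assms unfolding lam_def by (auto simp: card_gt_0_iff)

definition sync_move :: "algorithm \<Rightarrow> node set \<Rightarrow> nat \<Rightarrow> (nat \<Rightarrow> node \<Rightarrow> node)
    \<Rightarrow> (nat \<Rightarrow> node) \<Rightarrow> nat \<Rightarrow> node" where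
  "sync_move A M n F p i = F i (mvec (A (view_of M n p (p i) (F i))))"

definition sync_step :: "algorithm \<Rightarrow> node set \<Rightarrow> nat \<Rightarrow> (nat \<Rightarrow> node \<Rightarrow> node)
    \<Rightarrow> (nat \<Rightarrow> node) \<Rightarrow> nat \<Rightarrow> node" where
  "sync_step A M n F p i = addv (p i) (sync_move A M n F p i)"

lemma sync_execution_exists:
  assumes "\<forall>i<n. F i \<in> ortho_maps"
  obtains P Q where "async_execution A M n pos0 F P Q" and "fair n Q"
    and "\<And>t. P (2 * t) = (sync_step A M n F ^^ t) pos0"
proof -
  define P where "P t = (sync_step A M n F ^^ (t div 2)) pos0" for t
  define Q where "Q t i = (if even t then None else Some (sync_move A M n F (P t) i))" for t i
  have "async_execution A M n pos0 F P Q"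
    unfolding async_execution_def
  proof (intro conjI allI impI)
    fix t i
    show "P (Suc t) i = P t i \<and> Q (Suc t) i = Q t i
      \<or> Q t i = None \<and> P (Suc t) i = P t i \<and>
         Q (Suc t) i = Some (F i (mvec (A (view_of M n (P t) (P t i) (F i)))))
      \<or> (\<exists>d. Q t i = Some d \<and> P (Suc t) i = addv (P t i) d \<and> Q (Suc t) i = None)"
    proof (cases "even t")
      case True
      then have "P (Suc t) = P t" by (simp add: P_def)
      with True show ?thesis by (simp add: Q_def sync_move_def)
    next
      case False
      then have "Suc t div 2 = Suc (t div 2)" by presburger
      then have "P (Suc t) = sync_step A M n F (P t)" by (simp add: P_def)
      with False show ?thesis by (simp add: Q_def sync_step_def)
    qed
  qed (use assms in \<open>simp_all add: P_def Q_def\<close>)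
  moreover have "fair n Q"
    unfolding fair_def
  proof (intro allI impI)
    fix i t
    show "\<exists>t'\<ge>t. Q t' i \<noteq> None \<and> Q (Suc t') i = None"
      by (rule exI[of _ "2 * t + 1"]) (simp add: Q_def)
  qed
  ultimately show thesis
    by (rule that) (simp add: P_def)
qed

lemma solves_sync_gathers:
  assumes "solves A M n pos0" and "\<forall>i<n. F i \<in> ortho_maps"
  obtains T v where "v \<in> weber M n pos0" and "\<forall>i<n. (sync_step A M n F ^^ T) pos0 i = v"
proof -
  obtain P Q where "async_execution A M n pos0 F P Q" "fair n Q"
    and P: "\<And>t. P (2 * t) = (sync_step A M n F ^^ t) pos0"
    using sync_execution_exists[OF assms(2)] by blast
  then obtain T v where "v \<in> weber M n pos0" and "\<forall>t\<ge>T. \<forall>i<n. P t i = v"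
    using assms(1) unfolding solves_def gathers_at_weber_def by blast
  moreover from this(2) have "\<forall>i<n. P (2 * T) i = v" by simp
  ultimately show thesis
    using P[of T] by (intro that[of v T]) simp_all
qed

locale grid_involution =
  fixes \<psi> :: "node \<Rightarrow> node"
  assumes grid_aut: "grid_aut \<psi>"
    and involution: "\<psi> (\<psi> v) = v"
begin

lemma addv_linear_part: "\<psi> (addv v u) = addv (\<psi> v) (linear_part \<psi> u)"
  using grid_aut_linear_part(2)[OF grid_aut] .

lemma linear_part_involution: "linear_part \<psi> (linear_part \<psi> u) = u"
proof -
  have "addv (0, 0) u = addv (0, 0) (linear_part \<psi> (linear_part \<psi> u))"
    using involution[of "addv (0, 0) u"] involution[of "(0, 0)"] by (simp add: addv_linear_part)
  then show ?thesis by (simp add: addv_def)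
qed

(* The lexicographic order on nodes only serves to single out one node of each pair {v, psi v}. *)
definition mirror_frame :: "node \<Rightarrow> node \<Rightarrow> node" where
  "mirror_frame v = (if v < \<psi> v then id else linear_part \<psi>)"

lemma mirror_frame_ortho: "mirror_frame v \<in> ortho_maps"
  using id_in_ortho_maps grid_aut_linear_part(1)[OF grid_aut] by (simp add: mirror_frame_def)

lemma mirror_frame_mirror:
  assumes "\<psi> v \<noteq> v"
  shows "mirror_frame (\<psi> v) = linear_part \<psi> \<circ> mirror_frame v"
  using assms involution[of v] linear_part_involution
  by (auto simp: mirror_frame_def fun_eq_iff)

definition mirrored :: "nat \<Rightarrow> (nat \<Rightarrow> nat) \<Rightarrow> (nat \<Rightarrow> node) \<Rightarrow> bool" where
  "mirrored n \<sigma> p \<longleftrightarrow> (\<forall>i<n. p (\<sigma> i) = \<psi> (p i))"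

lemma lam_mirrored:
  assumes \<sigma>: "\<forall>i<n. \<sigma> i < n \<and> \<sigma> (\<sigma> i) = i" and "mirrored n \<sigma> p"
  shows "lam n p (\<psi> v) = lam n p v"
proof -
  have "{i. i < n \<and> p i = \<psi> v} = \<sigma> ` {i. i < n \<and> p i = v}"
  proof (intro equalityI subsetI)
    fix j assume "j \<in> {i. i < n \<and> p i = \<psi> v}"
    then have "\<sigma> j \<in> {i. i < n \<and> p i = v}" and "j = \<sigma> (\<sigma> j)"
      using assms involution unfolding mirrored_def by auto
    then show "j \<in> \<sigma> ` {i. i < n \<and> p i = v}" by blast
  qed (use assms in \<open>auto simp: mirrored_def\<close>)
  moreover have "inj_on \<sigma> {i. i < n \<and> p i = v}"
    using \<sigma> by (intro inj_on_inverseI[of _ \<sigma>]) auto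
  ultimately show ?thesis unfolding lam_def by (simp add: card_image)
qed

lemma view_of_mirror:
  assumes "\<psi> ` M = M" and "\<And>v. lam n p (\<psi> v) = lam n p v"
  shows "view_of M n p (\<psi> x) (linear_part \<psi> \<circ> G) = view_of M n p x G"
proof -
  have "\<psi> y \<in> M \<longleftrightarrow> y \<in> M" for y
    using assms(1) involution by (metis image_iff)
  moreover have "addv (\<psi> x) (linear_part \<psi> (G u)) = \<psi> (addv x (G u))" for u
    by (simp add: addv_linear_part)
  ultimately show ?thesis
    using assms(2) by (simp add: view_of_def)
qed

lemma sync_step_mirrored:
  assumes \<sigma>: "\<forall>i<n. \<sigma> i < n \<and> \<sigma> (\<sigma> i) = i" and "\<psi> ` M = M"
    and F: "\<forall>i<n. F (\<sigma> i) = linear_part \<psi> \<circ> F i" and p: "mirrored n \<sigma> p"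
  shows "mirrored n \<sigma> (sync_step A M n F p)"
  unfolding mirrored_def
proof (intro allI impI)
  fix i assume "i < n"
  have "sync_move A M n F p (\<sigma> i) = linear_part \<psi> (sync_move A M n F p i)"
    using \<open>i < n\<close> F p view_of_mirror[OF assms(2) lam_mirrored[OF \<sigma> p]]
    by (simp add: sync_move_def mirrored_def)
  then show "sync_step A M n F p (\<sigma> i) = \<psi> (sync_step A M n F p i)"
    using \<open>i < n\<close> p by (simp add: sync_step_def mirrored_def addv_linear_part)
qed

lemma robot_pairing:
  assumes inj: "inj_on pos0 {..<n}" and lam: "\<And>v. lam n pos0 (\<psi> v) = lam n pos0 v"
  obtains \<sigma> where "\<forall>i<n. \<sigma> i < n \<and> \<sigma> (\<sigma> i) = i" and "mirrored n \<sigma> pos0"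
proof -
  have img: "\<psi> (pos0 i) \<in> pos0 ` {..<n}" if "i < n" for i
  proof -
    have "0 < lam n pos0 (\<psi> (pos0 i))"
      using lam_pos[OF that] lam by simp
    then obtain j where "j < n" and "pos0 j = \<psi> (pos0 i)"
      unfolding lam_def by (auto simp: card_gt_0_iff)
    then show ?thesis by (metis image_eqI lessThan_iff)
  qed
  define \<sigma> where "\<sigma> i = the_inv_into {..<n} pos0 (\<psi> (pos0 i))" for i
  have \<sigma>: "\<sigma> i < n \<and> pos0 (\<sigma> i) = \<psi> (pos0 i)" if "i < n" for i
    using the_inv_into_into[OF inj img[OF that] order_refl] f_the_inv_into_f[OF inj img[OF that]]
    by (simp add: \<sigma>_def)
  have "\<sigma> (\<sigma> i) = i" if "i < n" for i
  proof -
    have "pos0 (\<sigma> (\<sigma> i)) = pos0 i"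
      using \<sigma>[OF that] \<sigma>[of "\<sigma> i"] involution by simp
    then show ?thesis
      using \<sigma>[OF that] \<sigma>[of "\<sigma> i"] that inj by (auto dest: inj_onD)
  qed
  with \<sigma> show thesis
    by (intro that[of \<sigma>]) (auto simp: mirrored_def)
qed

theorem not_solves:
  assumes inj: "inj_on pos0 {..<n}" and "n \<ge> 1" and sym: "config_sym M n pos0 \<psi>"
    and fixed: "\<And>v. \<psi> v = v \<Longrightarrow> v \<notin> weber M n pos0 \<and> lam n pos0 v = 0"
  shows "\<not> solves A M n pos0"
proof
  assume "solves A M n pos0"
  have M: "\<psi> ` M = M" and lam: "\<And>v. lam n pos0 (\<psi> v) = lam n pos0 v"
    using sym unfolding config_sym_def by auto
  obtain \<sigma> where \<sigma>: "\<forall>i<n. \<sigma> i < n \<and> \<sigma> (\<sigma> i) = i" and "mirrored n \<sigma> pos0"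
    using robot_pairing[OF inj lam] .
  define F where "F i = mirror_frame (pos0 i)" for i
  have F: "\<forall>i<n. F (\<sigma> i) = linear_part \<psi> \<circ> F i"
  proof (intro allI impI)
    fix i assume "i < n"
    then have "\<psi> (pos0 i) \<noteq> pos0 i"
      using lam_pos[of i n pos0] fixed[of "pos0 i"] by fastforce
    then show "F (\<sigma> i) = linear_part \<psi> \<circ> F i"
      using \<open>i < n\<close> \<open>mirrored n \<sigma> pos0\<close> by (simp add: F_def mirrored_def mirror_frame_mirror)
  qed
  have mirrored_rounds: "mirrored n \<sigma> ((sync_step A M n F ^^ k) pos0)" for k
    by (induction k) (simp_all add: \<open>mirrored n \<sigma> pos0\<close> sync_step_mirrored[OF \<sigma> M F])
  obtain T v where "v \<in> weber M n pos0" and gathered: "\<forall>i<n. (sync_step A M n F ^^ T) pos0 i = v"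
    using solves_sync_gathers \<open>solves A M n pos0\<close> mirror_frame_ortho by (metis F_def)
  moreover have "\<psi> v = v"
    using mirrored_rounds[of T] gathered \<sigma> \<open>n \<ge> 1\<close> unfolding mirrored_def
    by (metis less_one less_le_trans)
  ultimately show False
    using fixed by blast
qed

end

lemma config_sym_twice:
  assumes "config_sym M n p \<phi>" and "grid_aut (\<phi> \<circ> \<phi>)"
  shows "config_sym M n p (\<phi> \<circ> \<phi>)"
  using assms unfolding config_sym_def by (metis comp_apply image_comp)

lemma classI3b3_involution:
  assumes "classI3b3 M n pos0"
  obtains \<psi> where "grid_involution \<psi>" and "config_sym M n pos0 \<psi>"
    and "\<And>v. \<psi> v = v \<Longrightarrow> v \<notin> weber M n pos0 \<and> lam n pos0 v = 0"
  using assms unfolding classI3b3_def reflection_def grid_involution_def by blast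

lemma classI4b3_involution:
  assumes "classI4b3 M n pos0"
  obtains \<psi> where "grid_involution \<psi>" and "config_sym M n pos0 \<psi>"
    and "\<And>v. \<psi> v = v \<Longrightarrow> v \<notin> weber M n pos0 \<and> lam n pos0 v = 0"
proof -
  obtain \<phi> where rot: "rotation \<phi>" and sym: "config_sym M n pos0 \<phi>"
    and fixed: "\<And>v. \<phi> v = v \<Longrightarrow> v \<notin> M \<and> lam n pos0 v = 0"
    using assms unfolding classI4b3_def by blast
  obtain c where c: "half_turn c = \<phi> \<or> half_turn c = \<phi> \<circ> \<phi>"
    and c_fixed: "\<And>v. half_turn c v = v \<Longrightarrow> \<phi> v = v"
    using rotation_half_turn[OF rot] by blast
  show thesis
  proof (rule that)
    show "grid_involution (half_turn c)"
      by unfold_locales (simp_all add: grid_aut_half_turn half_turn_def subv_def)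
    show "config_sym M n pos0 (half_turn c)"
      using c sym config_sym_twice grid_aut_half_turn by metis
    show "v \<notin> weber M n pos0 \<and> lam n pos0 v = 0" if "half_turn c v = v" for v
      using fixed[OF c_fixed[OF that]] unfolding weber_def by blast
  qed
qed

theorem lemma2:
  fixes M :: "node set" and n :: nat and pos0 :: "nat \<Rightarrow> node"
  assumes "finite M"
    and "n \<ge> 1"
    and "inj_on pos0 {..<n}"
    and "classI3b3 M n pos0 \<or> classI4b3 M n pos0"
  shows "\<not> (\<exists>A :: algorithm. solves A M n pos0)"
proof -
  obtain \<psi> where "grid_involution \<psi>" and "config_sym M n pos0 \<psi>"
    and "\<And>v. \<psi> v = v \<Longrightarrow> v \<notin> weber M n pos0 \<and> lam n pos0 v = 0"
    using assms(4) classI3b3_involution classI4b3_involution by metis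
  then show ?thesis
    using grid_involution.not_solves[OF _ assms(3,2)] by blast
qed

end
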